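(* Let $\mathscr{A}$ be a finite alphabet with more than one letter and let $\mathcal{D}$ be a dictionary over $\mathscr{A}$ with subword complexity function $p(k)=\#(\mathcal{D}\cap\mathscr{A}^k)$. Then for every $k\in\mathbb{N}$, $n_{br}^\pm(k)\leq p(k+1)-p(k)$ and $$\frac{p(k+1)-p(k)}{\#\mathscr{A}-1}\leq n_{br}(k)\leq 2\big(p(k+1)-p(k)\big).$$ Moreover these estimates are optimal.
   Context: A dictionary is a non-empty set $\mathcal{D}$ of finite words over $\mathscr{A}$ containing the empty word, closed under taking subwords, and such that for each $u\in\mathcal{D}$ there are letters $a,b$ with $aub\in\mathcal{D}$. The GAP-graph $\mathscr{G}_k$ has vertex set $\mathcal{D}\cap\mathscr{A}^k$, edge set $\mathcal{D}\cap\mathscr{A}^{k+1}$, the edge $e=a_0\cdots a_k$ going from $\partial_0e=a_0\cdots a_{k-1}$ to $\partial_1e=a_1\cdots a_k$. For a vertex $u$, $\partial^+u$ (resp. $\partial^-u$) is the number of edges $e$ with $\partial_0e=u$ (resp. $\partial_1e=u$). $n_{br}^+(k)$ (resp. $n_{br}^-(k)$) is the number of vertices $u$ of $\mathscr{G}_k$ with $\partial^+u>1$ (resp. $\partial^-u>1$), and $n_{br}(k)$ is the number of vertices $u$ with $\partial^+u>1$ or $\partial^-u>1$. *)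

theory Defs
  imports Complex_Main "HOL-Library.Sublist"
begin

text \<open>Words over the alphabet are lists. "Subword" means contiguous factor
  (library notion sublist).\<close>

definition dictionary :: "'a set \<Rightarrow> 'a list set \<Rightarrow> bool" where
  "dictionary A D \<longleftrightarrow>
     D \<noteq> {} \<and> D \<subseteq> lists A \<and> [] \<in> D \<and>
     (\<forall>w\<in>D. \<forall>u. sublist u w \<longrightarrow> u \<in> D) \<and>
     (\<forall>u\<in>D. \<exists>a\<in>A. \<exists>b\<in>A. [a] @ u @ [b] \<in> D)"

definition complexity :: "'a list set \<Rightarrow> nat \<Rightarrow> nat" where
  "complexity D k = card {w\<in>D. length w = k}"

text \<open>GAP-graph: vertices of G_k are the words of D of length k, edges the words
  of length k+1; the edge e goes from its prefix of length k (take k e) to its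
  suffix of length k (drop 1 e).\<close>
definition out_deg :: "'a list set \<Rightarrow> 'a list \<Rightarrow> nat" where
  "out_deg D u = card {e\<in>D. length e = Suc (length u) \<and> take (length u) e = u}"

definition in_deg :: "'a list set \<Rightarrow> 'a list \<Rightarrow> nat" where
  "in_deg D u = card {e\<in>D. length e = Suc (length u) \<and> drop 1 e = u}"

definition n_br_plus :: "'a list set \<Rightarrow> nat \<Rightarrow> nat" where
  "n_br_plus D k = card {u\<in>D. length u = k \<and> out_deg D u > 1}"

definition n_br_minus :: "'a list set \<Rightarrow> nat \<Rightarrow> nat" where
  "n_br_minus D k = card {u\<in>D. length u = k \<and> in_deg D u > 1}"

definition n_br :: "'a list set \<Rightarrow> nat \<Rightarrow> nat" where
  "n_br D k = card {u\<in>D. length u = k \<and> (out_deg D u > 1 \<or> in_deg D u > 1)}"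

end

theory Submission
  imports Defs
begin

text \<open>In the GAP-graph \<open>G\<^sub>k\<close> every vertex has in- and out-degree between 1 and \<open>#A\<close>, and
  both the out-degrees and the in-degrees sum to \<open>p(k+1)\<close>. Hence \<open>p(k+1) - p(k)\<close> is the total
  excess \<open>\<Sum>(\<partial>\<^sup>+u - 1)\<close>, which is at least the number of right special vertices and at most
  \<open>#A - 1\<close> times it; symmetrically on the left. A branching vertex is right or left special,
  which gives the bounds for \<open>n\<^sub>b\<^sub>r\<close>. The full shift at \<open>k = 0\<close> and the words \<open>a\<^sup>ib\<^sup>j\<close> at
  \<open>k = 1\<close> show that all bounds are attained.\<close>

abbreviation words_of_length :: "'a list set \<Rightarrow> nat \<Rightarrow> 'a list set" where
  "words_of_length D k \<equiv> {w\<in>D. length w = k}"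

lemma card_eq_sum_card_fibres:
  assumes "finite V" "finite E" "g ` E \<subseteq> V"
  shows "card E = (\<Sum>u\<in>V. card {e\<in>E. g e = u})"
proof -
  have "E = (\<Union>u\<in>V. {e\<in>E. g e = u})" using assms(3) by auto
  also have "card \<dots> = (\<Sum>u\<in>V. card {e\<in>E. g e = u})"
    by (rule card_UN_disjoint) (use assms in auto)
  finally show ?thesis .
qed

lemma sum_eq_card_plus_sum_excess:
  fixes f :: "'b \<Rightarrow> nat"
  assumes "\<And>u. u \<in> V \<Longrightarrow> 1 \<le> f u"
  shows "sum f V = card V + (\<Sum>u\<in>V. f u - 1)"
proof -
  have "sum f V = (\<Sum>u\<in>V. 1 + (f u - 1))"
  proof (rule sum.cong)
    fix u assume "u \<in> V"
    with assms show "f u = 1 + (f u - 1)" by (metis le_add_diff_inverse)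
  qed simp
  also have "\<dots> = (\<Sum>u\<in>V. 1) + (\<Sum>u\<in>V. f u - 1)" by (rule sum.distrib)
  finally show ?thesis by simp
qed

lemma card_gt_one_le_sum_excess:
  fixes f :: "'b \<Rightarrow> nat"
  assumes "finite V"
  shows "card {u\<in>V. 1 < f u} \<le> (\<Sum>u\<in>V. f u - 1)"
proof -
  have "card {u\<in>V. 1 < f u} = (\<Sum>u\<in>{u\<in>V. 1 < f u}. 1)" by simp
  also have "\<dots> \<le> (\<Sum>u\<in>{u\<in>V. 1 < f u}. f u - 1)" by (rule sum_mono) auto
  also have "\<dots> \<le> (\<Sum>u\<in>V. f u - 1)" by (rule sum_mono2) (use assms in auto)
  finally show ?thesis .
qed

lemma sum_excess_le_card_gt_one:
  fixes f :: "'b \<Rightarrow> nat"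
  assumes "finite V" "\<And>u. u \<in> V \<Longrightarrow> f u \<le> c"
  shows "(\<Sum>u\<in>V. f u - 1) \<le> (c - 1) * card {u\<in>V. 1 < f u}"
proof -
  have "(\<Sum>u\<in>V. f u - 1) = (\<Sum>u\<in>{u\<in>V. 1 < f u}. f u - 1)"
    by (rule sum.mono_neutral_right) (use assms in auto)
  also have "\<dots> \<le> (\<Sum>u\<in>{u\<in>V. 1 < f u}. c - 1)"
    by (rule sum_mono) (simp add: assms diff_le_mono)
  finally show ?thesis by (simp add: mult.commute)
qed

lemma dictionary_subset_lists: "dictionary A D \<Longrightarrow> D \<subseteq> lists A"
  unfolding dictionary_def by blast

lemma dictionary_sublist_closed: "dictionary A D \<Longrightarrow> w \<in> D \<Longrightarrow> sublist u w \<Longrightarrow> u \<in> D"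
  unfolding dictionary_def by blast

lemma dictionary_extend_right:
  assumes "dictionary A D" "u \<in> D"
  obtains b where "b \<in> A" "u @ [b] \<in> D"
proof -
  obtain a b where "b \<in> A" "[a] @ u @ [b] \<in> D"
    using assms unfolding dictionary_def by blast
  moreover have "sublist (u @ [b]) ([a] @ u @ [b])"
    using sublist_appendI[of "u @ [b]" "[a]" "[]"] by simp
  ultimately show ?thesis using that dictionary_sublist_closed[OF assms(1)] by blast
qed

lemma dictionary_extend_left:
  assumes "dictionary A D" "u \<in> D"
  obtains a where "a \<in> A" "a # u \<in> D"
proof -
  obtain a b where "a \<in> A" "[a] @ u @ [b] \<in> D"
    using assms unfolding dictionary_def by blast
  moreover have "sublist (a # u) ([a] @ u @ [b])"
    using sublist_appendI[of "a # u" "[]" "[b]"] by simp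
  ultimately show ?thesis using that dictionary_sublist_closed[OF assms(1)] by blast
qed

lemma finite_words_of_length:
  assumes "finite A" "D \<subseteq> lists A"
  shows "finite (words_of_length D n)"
proof (rule finite_subset)
  show "words_of_length D n \<subseteq> {xs. set xs \<subseteq> A \<and> length xs = n}"
    using assms(2) by (auto simp: lists_eq_set)
qed (rule finite_lists_length_eq[OF assms(1)])

subsection \<open>Degrees in the GAP-graph\<close>

lemma out_deg_eq: "out_deg D u = card {e\<in>words_of_length D (Suc (length u)). take (length u) e = u}"
  unfolding out_deg_def by (simp add: conj_assoc)

lemma in_deg_eq: "in_deg D u = card {e\<in>words_of_length D (Suc (length u)). drop 1 e = u}"
  unfolding in_deg_def by (simp add: conj_assoc)

lemma take_append_last: "length x = Suc n \<Longrightarrow> take n x @ [last x] = x"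
  by (metis append_butlast_last_id butlast_conv_take diff_Suc_1 length_greater_0_conv zero_less_Suc)

lemma out_deg_le_card:
  assumes "finite A" "D \<subseteq> lists A"
  shows "out_deg D u \<le> card A"
proof -
  let ?E = "{e\<in>D. length e = Suc (length u) \<and> take (length u) e = u}"
  have "inj_on last ?E"
  proof (rule inj_onI)
    fix x y assume "x \<in> ?E" "y \<in> ?E" "last x = last y"
    then have "x = u @ [last x]" "y = u @ [last x]"
      using take_append_last[of x "length u"] take_append_last[of y "length u"] by auto
    then show "x = y" by simp
  qed
  moreover have "last ` ?E \<subseteq> A"
    using assms(2) by (force simp: lists_eq_set intro: last_in_set)
  ultimately show ?thesis unfolding out_deg_def by (rule card_inj_on_le[OF _ _ assms(1)])
qed

lemma in_deg_le_card:
  assumes "finite A" "D \<subseteq> lists A"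
  shows "in_deg D u \<le> card A"
proof -
  let ?E = "{e\<in>D. length e = Suc (length u) \<and> drop 1 e = u}"
  have "inj_on hd ?E"
  proof (rule inj_onI)
    fix x y assume "x \<in> ?E" "y \<in> ?E" "hd x = hd y"
    then have "x = hd x # u" "y = hd x # u" by (cases x; cases y; auto)+
    then show "x = y" by simp
  qed
  moreover have "hd ` ?E \<subseteq> A"
    using assms(2) by (force simp: lists_eq_set length_Suc_conv)
  ultimately show ?thesis unfolding in_deg_def by (rule card_inj_on_le[OF _ _ assms(1)])
qed

lemma out_deg_pos:
  assumes "finite A" "dictionary A D" "u \<in> D"
  shows "1 \<le> out_deg D u"
proof -
  let ?E = "{e\<in>words_of_length D (Suc (length u)). take (length u) e = u}"
  obtain b where "u @ [b] \<in> D" using dictionary_extend_right[OF assms(2,3)] .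
  then have "u @ [b] \<in> ?E" by simp
  moreover have "finite ?E"
    by (rule finite_subset[OF _ finite_words_of_length[OF assms(1) dictionary_subset_lists[OF assms(2)],
        of "Suc (length u)"]])
      auto
  ultimately have "out_deg D u \<noteq> 0" unfolding out_deg_eq card_eq_0_iff by blast
  then show ?thesis by simp
qed

lemma in_deg_pos:
  assumes "finite A" "dictionary A D" "u \<in> D"
  shows "1 \<le> in_deg D u"
proof -
  let ?E = "{e\<in>words_of_length D (Suc (length u)). drop 1 e = u}"
  obtain a where "a # u \<in> D" using dictionary_extend_left[OF assms(2,3)] .
  then have "a # u \<in> ?E" by simp
  moreover have "finite ?E"
    by (rule finite_subset[OF _ finite_words_of_length[OF assms(1) dictionary_subset_lists[OF assms(2)],
        of "Suc (length u)"]])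
      auto
  ultimately have "in_deg D u \<noteq> 0" unfolding in_deg_eq card_eq_0_iff by blast
  then show ?thesis by simp
qed

lemma complexity_Suc_eq_sum_out_deg:
  assumes "finite A" "dictionary A D"
  shows "complexity D (Suc k) = (\<Sum>u\<in>words_of_length D k. out_deg D u)"
proof -
  have "complexity D (Suc k) =
      (\<Sum>u\<in>words_of_length D k. card {e\<in>words_of_length D (Suc k). take k e = u})"
    unfolding complexity_def
  proof (rule card_eq_sum_card_fibres)
    show "finite (words_of_length D (Suc k))" "finite (words_of_length D k)"
      using finite_words_of_length[OF assms(1) dictionary_subset_lists[OF assms(2)]] by auto
    show "take k ` words_of_length D (Suc k) \<subseteq> words_of_length D k"
      using dictionary_sublist_closed[OF assms(2)] prefix_imp_sublist take_is_prefix by fastforce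
  qed
  also have "\<dots> = (\<Sum>u\<in>words_of_length D k. out_deg D u)"
    by (simp add: out_deg_eq)
  finally show ?thesis .
qed

lemma complexity_Suc_eq_sum_in_deg:
  assumes "finite A" "dictionary A D"
  shows "complexity D (Suc k) = (\<Sum>u\<in>words_of_length D k. in_deg D u)"
proof -
  have "complexity D (Suc k) =
      (\<Sum>u\<in>words_of_length D k. card {e\<in>words_of_length D (Suc k). drop 1 e = u})"
    unfolding complexity_def
  proof (rule card_eq_sum_card_fibres)
    show "finite (words_of_length D (Suc k))" "finite (words_of_length D k)"
      using finite_words_of_length[OF assms(1) dictionary_subset_lists[OF assms(2)]] by auto
    show "drop 1 ` words_of_length D (Suc k) \<subseteq> words_of_length D k"
      using dictionary_sublist_closed[OF assms(2)] suffix_imp_sublist suffix_drop by fastforce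
  qed
  also have "\<dots> = (\<Sum>u\<in>words_of_length D k. in_deg D u)"
    by (simp add: in_deg_eq)
  finally show ?thesis .
qed

lemma complexity_Suc_eq_out_excess:
  assumes "finite A" "dictionary A D"
  shows "complexity D (Suc k) = complexity D k + (\<Sum>u\<in>words_of_length D k. out_deg D u - 1)"
proof -
  have "complexity D (Suc k) = (\<Sum>u\<in>words_of_length D k. out_deg D u)"
    by (rule complexity_Suc_eq_sum_out_deg[OF assms])
  also have "\<dots> = card (words_of_length D k) + (\<Sum>u\<in>words_of_length D k. out_deg D u - 1)"
    by (rule sum_eq_card_plus_sum_excess) (blast intro: out_deg_pos[OF assms])
  finally show ?thesis unfolding complexity_def .
qed

lemma complexity_Suc_eq_in_excess:
  assumes "finite A" "dictionary A D"
  shows "complexity D (Suc k) = complexity D k + (\<Sum>u\<in>words_of_length D k. in_deg D u - 1)"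
proof -
  have "complexity D (Suc k) = (\<Sum>u\<in>words_of_length D k. in_deg D u)"
    by (rule complexity_Suc_eq_sum_in_deg[OF assms])
  also have "\<dots> = card (words_of_length D k) + (\<Sum>u\<in>words_of_length D k. in_deg D u - 1)"
    by (rule sum_eq_card_plus_sum_excess) (blast intro: in_deg_pos[OF assms])
  finally show ?thesis unfolding complexity_def .
qed

lemma n_br_plus_eq: "n_br_plus D k = card {u\<in>words_of_length D k. 1 < out_deg D u}"
  unfolding n_br_plus_def by (rule arg_cong[where f = card]) auto

lemma n_br_minus_eq: "n_br_minus D k = card {u\<in>words_of_length D k. 1 < in_deg D u}"
  unfolding n_br_minus_def by (rule arg_cong[where f = card]) auto

lemma n_br_eq: "n_br D k = card {u\<in>words_of_length D k. 1 < out_deg D u \<or> 1 < in_deg D u}"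
  unfolding n_br_def by (rule arg_cong[where f = card]) auto

lemma n_br_plus_le_complexity_diff:
  assumes "finite A" "dictionary A D"
  shows "n_br_plus D k \<le> complexity D (Suc k) - complexity D k"
proof -
  have "n_br_plus D k \<le> (\<Sum>u\<in>words_of_length D k. out_deg D u - 1)"
    unfolding n_br_plus_eq
    by (rule card_gt_one_le_sum_excess[OF finite_words_of_length[OF assms(1) dictionary_subset_lists[OF assms(2)]]])
  then show ?thesis using complexity_Suc_eq_out_excess[OF assms, of k] by linarith
qed

lemma n_br_minus_le_complexity_diff:
  assumes "finite A" "dictionary A D"
  shows "n_br_minus D k \<le> complexity D (Suc k) - complexity D k"
proof -
  have "n_br_minus D k \<le> (\<Sum>u\<in>words_of_length D k. in_deg D u - 1)"
    unfolding n_br_minus_eq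
    by (rule card_gt_one_le_sum_excess[OF finite_words_of_length[OF assms(1) dictionary_subset_lists[OF assms(2)]]])
  then show ?thesis using complexity_Suc_eq_in_excess[OF assms, of k] by linarith
qed

lemma complexity_diff_le_n_br_plus:
  assumes "finite A" "dictionary A D"
  shows "complexity D (Suc k) - complexity D k \<le> (card A - 1) * n_br_plus D k"
proof -
  note lists = dictionary_subset_lists[OF assms(2)]
  have "(\<Sum>u\<in>words_of_length D k. out_deg D u - 1) \<le> (card A - 1) * n_br_plus D k"
    unfolding n_br_plus_eq
    by (rule sum_excess_le_card_gt_one[OF finite_words_of_length[OF assms(1) lists] out_deg_le_card[OF assms(1) lists]])
  then show ?thesis using complexity_Suc_eq_out_excess[OF assms, of k] by linarith
qed

lemma n_br_plus_le_n_br: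
  assumes "finite A" "dictionary A D"
  shows "n_br_plus D k \<le> n_br D k"
proof -
  have "finite {u\<in>D. length u = k \<and> (1 < out_deg D u \<or> 1 < in_deg D u)}"
    by (rule finite_subset[OF _ finite_words_of_length[OF assms(1) dictionary_subset_lists[OF assms(2)],
          of k]]) auto
  then show ?thesis unfolding n_br_plus_def n_br_def by (rule card_mono) auto
qed

lemma n_br_le_n_br_plus_n_br_minus: "n_br D k \<le> n_br_plus D k + n_br_minus D k"
proof -
  have "{u\<in>D. length u = k \<and> (1 < out_deg D u \<or> 1 < in_deg D u)}
      = {u\<in>D. length u = k \<and> 1 < out_deg D u} \<union> {u\<in>D. length u = k \<and> 1 < in_deg D u}"
    by auto
  then show ?thesis unfolding n_br_def n_br_plus_def n_br_minus_def by (simp add: card_Un_le)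
qed

lemma branching_bounds:
  assumes "finite A" "card A \<ge> 2" "dictionary A D"
  shows "int (n_br_plus D k) \<le> int (complexity D (Suc k)) - int (complexity D k)
      \<and> int (n_br_minus D k) \<le> int (complexity D (Suc k)) - int (complexity D k)
      \<and> (real (complexity D (Suc k)) - real (complexity D k)) / (real (card A) - 1) \<le> real (n_br D k)
      \<and> int (n_br D k) \<le> 2 * (int (complexity D (Suc k)) - int (complexity D k))"
proof -
  let ?d = "complexity D (Suc k) - complexity D k"
  have mono: "complexity D k \<le> complexity D (Suc k)"
    using complexity_Suc_eq_out_excess[OF assms(1,3), of k] by linarith
  have "?d \<le> (card A - 1) * n_br D k"
    using complexity_diff_le_n_br_plus[OF assms(1,3), of k] n_br_plus_le_n_br[OF assms(1,3), of k]
    by (meson le_trans mult_le_mono2)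
  moreover have "real (card A - 1) = real (card A) - 1" using assms(2) by (simp add: of_nat_diff)
  ultimately have "real ?d \<le> (real (card A) - 1) * real (n_br D k)"
    by (metis of_nat_mono of_nat_mult)
  moreover have "real (card A) - 1 > 0" using assms(2) by simp
  ultimately have quotient: "real ?d / (real (card A) - 1) \<le> real (n_br D k)"
    by (simp add: pos_divide_le_eq mult.commute)
  have twice: "n_br D k \<le> 2 * ?d"
    using n_br_plus_le_complexity_diff[OF assms(1,3), of k] n_br_minus_le_complexity_diff[OF assms(1,3), of k]
      n_br_le_n_br_plus_n_br_minus[of D k] by linarith
  have real_diff: "real (complexity D (Suc k)) - real (complexity D k) = real ?d"
    and int_diff: "int (complexity D (Suc k)) - int (complexity D k) = int ?d"
    using mono by (simp_all add: of_nat_diff)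
  show ?thesis
    unfolding real_diff int_diff
    using quotient twice n_br_plus_le_complexity_diff[OF assms(1,3), of k]
      n_br_minus_le_complexity_diff[OF assms(1,3), of k]
    by simp
qed

subsection \<open>Optimality\<close>

lemma dictionary_lists:
  assumes "a \<in> A"
  shows "dictionary A (lists A)"
  unfolding dictionary_def using assms
  by (auto simp: lists_eq_set dest: set_mono_sublist intro: exI[of _ "[]"])

lemma words_of_length_one_lists: "words_of_length (lists A) (Suc 0) = (\<lambda>x. [x]) ` A"
  by (auto simp: length_Suc_conv)

lemma complexity_lists_one: "complexity (lists A) (Suc 0) = card A"
  unfolding complexity_def words_of_length_one_lists by (rule card_image) (simp add: inj_on_def)

lemma complexity_lists_zero: "complexity (lists A) 0 = 1"
  unfolding complexity_def by (simp cong: conj_cong)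

lemma n_br_lists_zero:
  assumes "card A \<ge> 2"
  shows "n_br (lists A) 0 = 1"
proof -
  have "out_deg (lists A) [] = card A"
    unfolding out_deg_def using complexity_lists_one unfolding complexity_def by simp
  hence "{u\<in>lists A. length u = 0 \<and> (1 < out_deg (lists A) u \<or> 1 < in_deg (lists A) u)} = {[]}"
    using assms by auto
  thus ?thesis unfolding n_br_def by simp
qed

text \<open>The words \<open>a\<^sup>ib\<^sup>j\<close>.\<close>

definition ab_words :: "'a \<Rightarrow> 'a \<Rightarrow> 'a list set" where
  "ab_words a b = {w\<in>lists {a, b}. sorted_wrt (\<lambda>x y. x = b \<longrightarrow> y = b) w}"

lemma dictionary_ab_words:
  assumes "a \<in> A" "b \<in> A" "a \<noteq> b"
  shows "dictionary A (ab_words a b)"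
  unfolding dictionary_def ab_words_def sublist_def
  using assms by (auto simp: sorted_wrt_append lists_eq_set intro: exI[of _ "[]"])

lemma ab_words_length_one: "words_of_length (ab_words a b) 1 = {[a], [b]}"
  unfolding ab_words_def by (auto simp: length_Suc_conv)

lemma ab_words_length_two:
  assumes "a \<noteq> b"
  shows "words_of_length (ab_words a b) 2 = {[a, a], [a, b], [b, b]}"
  unfolding ab_words_def using assms by (auto simp: length_Suc_conv numeral_2_eq_2)

lemma ab_words_degrees:
  assumes "a \<noteq> b"
  shows "out_deg (ab_words a b) [a] = 2" "out_deg (ab_words a b) [b] = 1"
    "in_deg (ab_words a b) [a] = 1" "in_deg (ab_words a b) [b] = 2"
proof -
  have "{e\<in>words_of_length (ab_words a b) 2. take 1 e = [a]} = {[a, a], [a, b]}"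
    "{e\<in>words_of_length (ab_words a b) 2. take 1 e = [b]} = {[b, b]}"
    "{e\<in>words_of_length (ab_words a b) 2. drop 1 e = [a]} = {[a, a]}"
    "{e\<in>words_of_length (ab_words a b) 2. drop 1 e = [b]} = {[a, b], [b, b]}"
    unfolding ab_words_length_two[OF assms] using assms by auto
  thus "out_deg (ab_words a b) [a] = 2" "out_deg (ab_words a b) [b] = 1"
    "in_deg (ab_words a b) [a] = 1" "in_deg (ab_words a b) [b] = 2"
    unfolding out_deg_eq in_deg_eq using assms by (simp_all add: numeral_2_eq_2)
qed

lemma ab_words_branching:
  assumes "a \<noteq> b"
  shows "complexity (ab_words a b) 1 = 2" "complexity (ab_words a b) 2 = 3"
    "n_br_plus (ab_words a b) 1 = 1" "n_br_minus (ab_words a b) 1 = 1" "n_br (ab_words a b) 1 = 2"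
proof -
  show "complexity (ab_words a b) 1 = 2" "complexity (ab_words a b) 2 = 3"
    unfolding complexity_def ab_words_length_one ab_words_length_two[OF assms] using assms by auto
  have "{u\<in>{[a], [b]}. 1 < out_deg (ab_words a b) u} = {[a]}"
    "{u\<in>{[a], [b]}. 1 < in_deg (ab_words a b) u} = {[b]}"
    "{u\<in>{[a], [b]}. 1 < out_deg (ab_words a b) u \<or> 1 < in_deg (ab_words a b) u} = {[a], [b]}"
    using ab_words_degrees[OF assms] by auto
  then show "n_br_plus (ab_words a b) 1 = 1" "n_br_minus (ab_words a b) 1 = 1"
    "n_br (ab_words a b) 1 = 2"
    unfolding n_br_plus_eq n_br_minus_eq n_br_eq ab_words_length_one using assms by simp_all
qed

theorem proposition12:
  fixes A :: "'a set" and D :: "'a list set"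
  assumes "finite A" and "card A \<ge> 2" and "dictionary A D"
  shows "(\<forall>k. int (n_br_plus D k) \<le> int (complexity D (Suc k)) - int (complexity D k)
            \<and> int (n_br_minus D k) \<le> int (complexity D (Suc k)) - int (complexity D k)
            \<and> (real (complexity D (Suc k)) - real (complexity D k)) / (real (card A) - 1)
                 \<le> real (n_br D k)
            \<and> int (n_br D k) \<le> 2 * (int (complexity D (Suc k)) - int (complexity D k)))
       \<and> (\<exists>D' k. dictionary A D' \<and> complexity D' k < complexity D' (Suc k) \<and>
            int (n_br_plus D' k) = int (complexity D' (Suc k)) - int (complexity D' k))
       \<and> (\<exists>D' k. dictionary A D' \<and> complexity D' k < complexity D' (Suc k) \<and>
            int (n_br_minus D' k) = int (complexity D' (Suc k)) - int (complexity D' k))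
       \<and> (\<exists>D' k. dictionary A D' \<and> complexity D' k < complexity D' (Suc k) \<and>
            (real (complexity D' (Suc k)) - real (complexity D' k)) / (real (card A) - 1)
              = real (n_br D' k))
       \<and> (\<exists>D' k. dictionary A D' \<and> complexity D' k < complexity D' (Suc k) \<and>
            int (n_br D' k) = 2 * (int (complexity D' (Suc k)) - int (complexity D' k)))"
proof -
  have "\<not> card A \<le> Suc 0" using assms(2) by simp
  then obtain a b where a: "a \<in> A" and b: "b \<in> A" "a \<noteq> b"
    using card_le_Suc0_iff_eq[OF assms(1)] by blast
  let ?E = "ab_words a b" and ?F = "lists A"
  have E: "dictionary A ?E" "complexity ?E 1 < complexity ?E (Suc 1)"
    "int (n_br_plus ?E 1) = int (complexity ?E (Suc 1)) - int (complexity ?E 1)"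
    "int (n_br_minus ?E 1) = int (complexity ?E (Suc 1)) - int (complexity ?E 1)"
    "int (n_br ?E 1) = 2 * (int (complexity ?E (Suc 1)) - int (complexity ?E 1))"
    using dictionary_ab_words[OF a b] ab_words_branching[OF b(2)] by (simp_all add: numeral_2_eq_2)
  have F: "dictionary A ?F" "complexity ?F 0 < complexity ?F (Suc 0)"
    "(real (complexity ?F (Suc 0)) - real (complexity ?F 0)) / (real (card A) - 1) = real (n_br ?F 0)"
    using dictionary_lists[OF a] assms(2)
    by (simp_all add: complexity_lists_zero complexity_lists_one n_br_lists_zero)
  show ?thesis using branching_bounds[OF assms] E F by blast
qed

end
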